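(* Let $C$ and $\alpha$ be as in the construction in the context. For every finite set $F\subset C$, every $\varepsilon>0$ and every $N\in\mathbb{N}$ there exist $m\ge N$ (which can be taken to be a power of $2$) and projections $p_0,\dots,p_{m-1}\in C$ such that $\sum_{k=0}^{m-1}p_k = 1$, $\|\alpha(p_k) - p_{k+1}\| < \varepsilon$ for all $k$ (indices modulo $m$), and $\|[p_k,a]\| < \varepsilon$ for all $k$ and all $a\in F$. In particular $\alpha$ has the Rokhlin property.
   Context: Construction. Let $(d(n))_{n\ge 0}$ be natural numbers with $d(0)=1$ and $d(n) > 2^{n-1}$ for $n \ge 1$. Put $l(0)=1$, $l(n) = d(n) + 2^{n-1}$ for $n\ge1$, $r(n) = \prod_{j=0}^n l(j)$, $s(n) = \prod_{j=0}^n d(j)$, and $\kappa = \inf_{n\in\mathbb{N}} s(n)/r(n)$; assume $\kappa > 1/2$ (e.g. $d(n)=10^n$). Let $X_n = (S^2)^{s(n)}$, identified with $X_{n+1} = X_n^{d(n+1)}$, and let $P^{(n)}_j\colon X_{n+1}\to X_n$ ($1\le j\le d(n+1)$) be the $j$-th coordinate projection. Choose points $x_m \in X_m$ ($m\ge 0$) such that for every $n\ge 0$ the set of points $(P^{(n)}_{\nu_1}\circ P^{(n+1)}_{\nu_2}\circ\cdots\circ P^{(m-1)}_{\nu_{m-n}})(x_m)$, over all $m>n$ and all $\nu_j \in \{1,\dots,d(n+j)\}$, is dense in $X_n$. Let $\mathbb{Z}_{2^n} = \mathbb{Z}/2^n\mathbb{Z}$, $\pi_{n,n+1}\colon \mathbb{Z}_{2^{n+1}}\to\mathbb{Z}_{2^n}$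 the reduction mod $2^n$. Set $C_n = M_{r(n)} \otimes C(X_n \times \mathbb{Z}_{2^n}) \cong C(X_n\times\mathbb{Z}_{2^n}, M_{r(n)})$, identifying $M_{r(n)} = M_{l(1)}\otimes\cdots\otimes M_{l(n)}$. Define $S_{n,1},\dots,S_{n,l(n+1)}\colon X_{n+1}\times\mathbb{Z}_{2^{n+1}} \to X_n\times \mathbb{Z}_{2^n}$ by $S_{n,j}(x,k) = (P^{(n)}_j(x), \pi_{n,n+1}(k))$ for $1\le j\le d(n+1)$, and $S_{n,d(n+1)+1+j}(x,k) = (x_n, j)$ for $j = 0,1,\dots,2^n-1$. Let $\gamma_n\colon C(X_n\times\mathbb{Z}_{2^n}) \to M_{l(n+1)}(C(X_{n+1}\times\mathbb{Z}_{2^{n+1}}))$, $\gamma_n(f) = \operatorname{diag}(f\circ S_{n,1},\dots,f\circ S_{n,l(n+1)})$, and $\Gamma_{n+1,n} = \mathrm{id}_{M_{r(n)}}\otimes\gamma_n\colon C_n\to C_{n+1}$; $\Gamma_{n,m}$ denote the composites and $C = \varinjlim C_n$ with canonical maps $\Gamma_{\infty,m}\colon C_m\to C$. For $n\ge1$ let $v_n\in M_{l(n)}$ be the unitary $v_n = \sum_{j=1}^{d(n)} e_{j,j} + \sum_{j=1}^{2^{n-1}-1} e_{d(n)+j,\,d(n)+j+1} + e_{d(n)+2^{n-1},\,d(n)+1}$ (identity on the first $d(n)$ coordinates, cyclic permutation of the last $2^{n-1}$), let $u_n = v_1\otimes\cdots\otimes v_n \in M_{r(n)}$ ($u_0=1$),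 and define automorphisms $\alpha_n$ of $C_n$ by $\alpha_n(f)(x,k) = u_n f(x, k+1) u_n^*$. These satisfy $\alpha_{n+1}\circ\Gamma_{n+1,n} = \Gamma_{n+1,n}\circ\alpha_n$, and $\alpha$ denotes the induced automorphism of $C$. *)

theory Defs
  imports "HOL-Analysis.Analysis"
begin

text \<open>Points of X_n x Z_(2^n): X_n = (S^2)^(s n) is modelled as the set of
  x :: nat => real^3 with x i on the unit sphere for i < s n and x i = 0 otherwise
  (product topology); Z_(2^n) is modelled as {0..<2^n} (discrete topology of nat).\<close>
type_synonym pt = "(nat \<Rightarrow> real^3) \<times> nat"
text \<open>An element of C_n = C(X_n x Z_(2^n), M_(r n)): entries indexed by i, j < r n.\<close>
type_synonym cfun = "pt \<Rightarrow> nat \<Rightarrow> nat \<Rightarrow> complex"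
text \<open>An element of the algebraic inductive limit: a level n and an element of C_n.\<close>
type_synonym lelt = "nat \<times> cfun"
text \<open>An element of C (completion): a Cauchy sequence of elements of the algebraic limit.\<close>
type_synonym celt = "nat \<Rightarrow> lelt"

definition sS :: "(nat \<Rightarrow> nat) \<Rightarrow> nat \<Rightarrow> nat" where
  "sS d n = (\<Prod>j\<le>n. d j)"

definition lL :: "(nat \<Rightarrow> nat) \<Rightarrow> nat \<Rightarrow> nat" where
  "lL d n = (if n = 0 then 1 else d n + 2 ^ (n - 1))"

definition rR :: "(nat \<Rightarrow> nat) \<Rightarrow> nat \<Rightarrow> nat" where
  "rR d n = (\<Prod>j\<le>n. lL d j)"

definition kappa :: "(nat \<Rightarrow> nat) \<Rightarrow> real" where
  "kappa d = (INF n. real (sS d n) / real (rR d n))"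

definition Xsp :: "(nat \<Rightarrow> nat) \<Rightarrow> nat \<Rightarrow> (nat \<Rightarrow> real^3) set" where
  "Xsp d n = {x. (\<forall>i < sS d n. x i \<in> sphere 0 1) \<and> (\<forall>i. sS d n \<le> i \<longrightarrow> x i = 0)}"

definition Zn :: "nat \<Rightarrow> nat set" where
  "Zn n = {..<(2::nat) ^ n}"

text \<open>j-th coordinate projection X_(n+1) = X_n^(d(n+1)) -> X_n, 1 \<le> j \<le> d(n+1);
  the j-th factor occupies the block of coordinates (j-1) s(n) .. j s(n) - 1.\<close>
definition proj :: "(nat \<Rightarrow> nat) \<Rightarrow> nat \<Rightarrow> nat \<Rightarrow> (nat \<Rightarrow> real^3) \<Rightarrow> (nat \<Rightarrow> real^3)" where
  "proj d n j x = (\<lambda>i. if i < sS d n then x ((j - 1) * sS d n + i) else 0)"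

text \<open>iterK d n k nu x = (P^(n)_(nu 1) o P^(n+1)_(nu 2) o ... o P^(n+k-1)_(nu k)) x\<close>
primrec iterK :: "(nat \<Rightarrow> nat) \<Rightarrow> nat \<Rightarrow> nat \<Rightarrow> (nat \<Rightarrow> nat) \<Rightarrow> (nat \<Rightarrow> real^3) \<Rightarrow> (nat \<Rightarrow> real^3)" where
  "iterK d n 0 nu x = x"
| "iterK d n (Suc k) nu x = iterK d n k nu (proj d (n + k) (nu (Suc k)) x)"

definition Smap :: "(nat \<Rightarrow> nat) \<Rightarrow> (nat \<Rightarrow> (nat \<Rightarrow> real^3)) \<Rightarrow> nat \<Rightarrow> nat \<Rightarrow> pt \<Rightarrow> pt" where
  "Smap d xs n j p =
     (if j \<le> d (Suc n) then (proj d n j (fst p), snd p mod 2 ^ n)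
      else (xs n, j - d (Suc n) - 1))"

definition mmul :: "nat \<Rightarrow> (nat \<Rightarrow> nat \<Rightarrow> complex) \<Rightarrow> (nat \<Rightarrow> nat \<Rightarrow> complex) \<Rightarrow> (nat \<Rightarrow> nat \<Rightarrow> complex)" where
  "mmul r A B = (\<lambda>i j. \<Sum>l<r. A i l * B l j)"

definition madj :: "(nat \<Rightarrow> nat \<Rightarrow> complex) \<Rightarrow> (nat \<Rightarrow> nat \<Rightarrow> complex)" where
  "madj A = (\<lambda>i j. cnj (A j i))"

definition vnorm :: "nat \<Rightarrow> (nat \<Rightarrow> complex) \<Rightarrow> real" where
  "vnorm r v = sqrt (\<Sum>i<r. (cmod (v i))\<^sup>2)"

definition opnorm :: "nat \<Rightarrow> (nat \<Rightarrow> nat \<Rightarrow> complex) \<Rightarrow> real" where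
  "opnorm r A = Sup {vnorm r (\<lambda>i. \<Sum>j<r. A i j * v j) | v. vnorm r v \<le> 1}"

text \<open>v_n (n \<ge> 1), 0-indexed: identity on the first d(n) coordinates,
  cyclic permutation of the last 2^(n-1).\<close>
definition vmat :: "(nat \<Rightarrow> nat) \<Rightarrow> nat \<Rightarrow> nat \<Rightarrow> nat \<Rightarrow> complex" where
  "vmat d n i j =
     (if (i < d n \<and> j = i)
         \<or> (d n \<le> i \<and> i + 1 < d n + 2 ^ (n - 1) \<and> j = i + 1)
         \<or> (i + 1 = d n + 2 ^ (n - 1) \<and> j = d n)
      then 1 else 0)"

text \<open>u_n = v_1 \<otimes> ... \<otimes> v_n, with the index convention M_(r(n+1)) = M_(r n) \<otimes> M_(l(n+1)),
  (a, b) \<leftrightarrow> a * l(n+1) + b.\<close>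
primrec umat :: "(nat \<Rightarrow> nat) \<Rightarrow> nat \<Rightarrow> nat \<Rightarrow> nat \<Rightarrow> complex" where
  "umat d 0 = (\<lambda>i j. if i = j then 1 else 0)"
| "umat d (Suc n) = (\<lambda>I J. umat d n (I div lL d (Suc n)) (J div lL d (Suc n))
                           * vmat d (Suc n) (I mod lL d (Suc n)) (J mod lL d (Suc n)))"

definition Cn_car :: "(nat \<Rightarrow> nat) \<Rightarrow> nat \<Rightarrow> cfun set" where
  "Cn_car d n = {f. \<forall>i < rR d n. \<forall>j < rR d n. continuous_on (Xsp d n \<times> Zn n) (\<lambda>p. f p i j)}"

definition Cnorm :: "(nat \<Rightarrow> nat) \<Rightarrow> nat \<Rightarrow> cfun \<Rightarrow> real" where
  "Cnorm d n f = Sup ((\<lambda>p. opnorm (rR d n) (f p)) ` (Xsp d n \<times> Zn n))"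

definition Gamma1 :: "(nat \<Rightarrow> nat) \<Rightarrow> (nat \<Rightarrow> (nat \<Rightarrow> real^3)) \<Rightarrow> nat \<Rightarrow> cfun \<Rightarrow> cfun" where
  "Gamma1 d xs n f = (\<lambda>p I J.
     if I mod lL d (Suc n) = J mod lL d (Suc n)
     then f (Smap d xs n (I mod lL d (Suc n) + 1) p) (I div lL d (Suc n)) (J div lL d (Suc n))
     else 0)"

primrec GamK :: "(nat \<Rightarrow> nat) \<Rightarrow> (nat \<Rightarrow> (nat \<Rightarrow> real^3)) \<Rightarrow> nat \<Rightarrow> nat \<Rightarrow> cfun \<Rightarrow> cfun" where
  "GamK d xs n 0 f = f"
| "GamK d xs n (Suc k) f = Gamma1 d xs (n + k) (GamK d xs n k f)"

definition alphan :: "(nat \<Rightarrow> nat) \<Rightarrow> nat \<Rightarrow> cfun \<Rightarrow> cfun" where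
  "alphan d n f = (\<lambda>p. mmul (rR d n) (mmul (rR d n) (umat d n) (f (fst p, (snd p + 1) mod 2 ^ n)))
                          (madj (umat d n)))"

definition lvalid :: "(nat \<Rightarrow> nat) \<Rightarrow> lelt \<Rightarrow> bool" where
  "lvalid d e \<longleftrightarrow> snd e \<in> Cn_car d (fst e)"

definition llift :: "(nat \<Rightarrow> nat) \<Rightarrow> (nat \<Rightarrow> (nat \<Rightarrow> real^3)) \<Rightarrow> nat \<Rightarrow> lelt \<Rightarrow> cfun" where
  "llift d xs m e = GamK d xs (fst e) (m - fst e) (snd e)"

definition lbin :: "(nat \<Rightarrow> nat) \<Rightarrow> (nat \<Rightarrow> (nat \<Rightarrow> real^3))
     \<Rightarrow> (nat \<Rightarrow> cfun \<Rightarrow> cfun \<Rightarrow> cfun) \<Rightarrow> lelt \<Rightarrow> lelt \<Rightarrow> lelt" where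
  "lbin d xs op e e' = (let m = max (fst e) (fst e') in (m, op m (llift d xs m e) (llift d xs m e')))"

definition ladd :: "(nat \<Rightarrow> nat) \<Rightarrow> (nat \<Rightarrow> (nat \<Rightarrow> real^3)) \<Rightarrow> lelt \<Rightarrow> lelt \<Rightarrow> lelt" where
  "ladd d xs = lbin d xs (\<lambda>m f g. \<lambda>p i j. f p i j + g p i j)"

definition lminus :: "(nat \<Rightarrow> nat) \<Rightarrow> (nat \<Rightarrow> (nat \<Rightarrow> real^3)) \<Rightarrow> lelt \<Rightarrow> lelt \<Rightarrow> lelt" where
  "lminus d xs = lbin d xs (\<lambda>m f g. \<lambda>p i j. f p i j - g p i j)"

definition lmul :: "(nat \<Rightarrow> nat) \<Rightarrow> (nat \<Rightarrow> (nat \<Rightarrow> real^3)) \<Rightarrow> lelt \<Rightarrow> lelt \<Rightarrow> lelt" where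
  "lmul d xs = lbin d xs (\<lambda>m f g. \<lambda>p. mmul (rR d m) (f p) (g p))"

definition lstar :: "lelt \<Rightarrow> lelt" where
  "lstar e = (fst e, \<lambda>p. madj (snd e p))"

definition lnorm :: "(nat \<Rightarrow> nat) \<Rightarrow> lelt \<Rightarrow> real" where
  "lnorm d e = Cnorm d (fst e) (snd e)"

definition ldist :: "(nat \<Rightarrow> nat) \<Rightarrow> (nat \<Rightarrow> (nat \<Rightarrow> real^3)) \<Rightarrow> lelt \<Rightarrow> lelt \<Rightarrow> real" where
  "ldist d xs e e' = lnorm d (lminus d xs e e')"

definition Ccar :: "(nat \<Rightarrow> nat) \<Rightarrow> (nat \<Rightarrow> (nat \<Rightarrow> real^3)) \<Rightarrow> celt set" where
  "Ccar d xs = {a. (\<forall>i. lvalid d (a i)) \<and>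
     (\<forall>\<epsilon>>0. \<exists>N. \<forall>i\<ge>N. \<forall>j\<ge>N. ldist d xs (a i) (a j) < \<epsilon>)}"

definition Ceq :: "(nat \<Rightarrow> nat) \<Rightarrow> (nat \<Rightarrow> (nat \<Rightarrow> real^3)) \<Rightarrow> celt \<Rightarrow> celt \<Rightarrow> bool" where
  "Ceq d xs a b \<longleftrightarrow> (\<lambda>i. ldist d xs (a i) (b i)) \<longlonglongrightarrow> 0"

definition CnormC :: "(nat \<Rightarrow> nat) \<Rightarrow> celt \<Rightarrow> real" where
  "CnormC d a = lim (\<lambda>i. lnorm d (a i))"

definition Cadd :: "(nat \<Rightarrow> nat) \<Rightarrow> (nat \<Rightarrow> (nat \<Rightarrow> real^3)) \<Rightarrow> celt \<Rightarrow> celt \<Rightarrow> celt" where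
  "Cadd d xs a b = (\<lambda>i. ladd d xs (a i) (b i))"

definition Cminus :: "(nat \<Rightarrow> nat) \<Rightarrow> (nat \<Rightarrow> (nat \<Rightarrow> real^3)) \<Rightarrow> celt \<Rightarrow> celt \<Rightarrow> celt" where
  "Cminus d xs a b = (\<lambda>i. lminus d xs (a i) (b i))"

definition Cmul :: "(nat \<Rightarrow> nat) \<Rightarrow> (nat \<Rightarrow> (nat \<Rightarrow> real^3)) \<Rightarrow> celt \<Rightarrow> celt \<Rightarrow> celt" where
  "Cmul d xs a b = (\<lambda>i. lmul d xs (a i) (b i))"

definition Cstar :: "celt \<Rightarrow> celt" where
  "Cstar a = (\<lambda>i. lstar (a i))"

definition Czero :: celt where
  "Czero = (\<lambda>i. (0, \<lambda>p k l. 0))"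

definition Cone :: celt where
  "Cone = (\<lambda>i. (0, \<lambda>p k l. if k = l then 1 else 0))"

primrec Csum :: "(nat \<Rightarrow> nat) \<Rightarrow> (nat \<Rightarrow> (nat \<Rightarrow> real^3)) \<Rightarrow> (nat \<Rightarrow> celt) \<Rightarrow> nat \<Rightarrow> celt" where
  "Csum d xs p 0 = Czero"
| "Csum d xs p (Suc m) = Cadd d xs (Csum d xs p m) (p m)"

definition Calpha :: "(nat \<Rightarrow> nat) \<Rightarrow> celt \<Rightarrow> celt" where
  "Calpha d a = (\<lambda>i. (fst (a i), alphan d (fst (a i)) (snd (a i))))"

definition Cproj :: "(nat \<Rightarrow> nat) \<Rightarrow> (nat \<Rightarrow> (nat \<Rightarrow> real^3)) \<Rightarrow> celt \<Rightarrow> bool" where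
  "Cproj d xs p \<longleftrightarrow> p \<in> Ccar d xs \<and> Ceq d xs (Cmul d xs p p) p \<and> Ceq d xs (Cstar p) p"

end

theory Submission
  imports Defs
begin

text \<open>The towers come from the Z_(2^n) factor alone. At level n the functions
  p_c = 1_(X_n x {c}) \<otimes> 1 (c < 2^n) are central projections of C_n adding up to 1, and alpha_n,
  which shifts the Z_(2^n)-coordinate and conjugates by a unitary, maps p_c exactly to p_(c-1).
  The connecting maps are isometric *-homomorphisms, so this persists in C. Being central at
  level n, p_c commutes exactly with everything coming from levels \<le> n, and x \<mapsto> \<parallel>[p_c, x]\<parallel>
  is 2-Lipschitz; hence choosing n above the levels of close approximants of the finitely many
  elements of F makes all commutators small.\<close>

section \<open>The operator norm of matrices\<close>

definition mat_vec :: "nat \<Rightarrow> (nat \<Rightarrow> nat \<Rightarrow> complex) \<Rightarrow> (nat \<Rightarrow> complex) \<Rightarrow> nat \<Rightarrow> complex" where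
  "mat_vec r A v = (\<lambda>i. \<Sum>j<r. A i j * v j)"

lemma vnorm_L2: "vnorm r v = L2_set (\<lambda>i. cmod (v i)) {..<r}"
  by (simp add: vnorm_def L2_set_def)

lemma vnorm_nonneg [simp]: "0 \<le> vnorm r v"
  by (simp add: vnorm_L2)

lemma vnorm_zero [simp]: "vnorm r (\<lambda>i. 0) = 0"
  by (simp add: vnorm_def)

lemma vnorm_cong: "(\<And>i. i < r \<Longrightarrow> v i = w i) \<Longrightarrow> vnorm r v = vnorm r w"
  unfolding vnorm_L2 by (rule L2_set_cong) auto

lemma vnorm_triangle: "vnorm r (v - w) \<le> vnorm r v + vnorm r w"
proof -
  have "vnorm r (v - w) \<le> L2_set (\<lambda>i. cmod (v i) + cmod (w i)) {..<r}"
    unfolding vnorm_L2 by (rule L2_set_mono) (auto simp: norm_triangle_ineq4)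
  also have "\<dots> \<le> vnorm r v + vnorm r w"
    unfolding vnorm_L2 by (rule L2_set_triangle_ineq)
  finally show ?thesis .
qed

lemma vnorm_scale: "vnorm r (\<lambda>i. c * v i) = cmod c * vnorm r v"
  unfolding vnorm_L2 by (simp add: L2_set_right_distrib norm_mult)

lemma vnorm_eq_0D: "vnorm r v = 0 \<Longrightarrow> i < r \<Longrightarrow> v i = 0"
  unfolding vnorm_L2 by (subst (asm) L2_set_eq_0_iff) auto

lemma norm_le_vnorm: "i < r \<Longrightarrow> cmod (v i) \<le> vnorm r v"
  unfolding vnorm_L2 by (rule member_le_L2_set) auto

lemma vnorm_le_sum: "vnorm r v \<le> (\<Sum>i<r. cmod (v i))"
  unfolding vnorm_L2 by (rule L2_set_le_sum) auto

lemma vnorm_power2: "(vnorm r v)\<^sup>2 = (\<Sum>i<r. (cmod (v i))\<^sup>2)"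
  unfolding vnorm_def by (simp add: sum_nonneg)

lemma mat_vec_diff: "mat_vec r (A - B) v = mat_vec r A v - mat_vec r B v"
  by (simp add: mat_vec_def fun_eq_iff algebra_simps sum_subtractf)

lemma mat_vec_mmul: "mat_vec r (mmul r A B) v = mat_vec r A (mat_vec r B v)"
proof
  fix i
  have "mat_vec r (mmul r A B) v i = (\<Sum>j<r. \<Sum>l<r. A i l * B l j * v j)"
    unfolding mat_vec_def mmul_def by (simp add: sum_distrib_right)
  also have "\<dots> = (\<Sum>l<r. \<Sum>j<r. A i l * B l j * v j)"
    by (rule sum.swap)
  also have "\<dots> = mat_vec r A (mat_vec r B v) i"
    unfolding mat_vec_def by (simp add: sum_distrib_left mult.assoc)
  finally show "mat_vec r (mmul r A B) v i = mat_vec r A (mat_vec r B v) i" .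
qed

lemma vnorm_mat_vec_le_sum:
  assumes "vnorm r v \<le> 1"
  shows "vnorm r (mat_vec r A v) \<le> (\<Sum>i<r. \<Sum>j<r. cmod (A i j))"
proof -
  have "cmod (mat_vec r A v i) \<le> (\<Sum>j<r. cmod (A i j))" for i
  proof -
    have "cmod (mat_vec r A v i) \<le> (\<Sum>j<r. cmod (A i j * v j))"
      unfolding mat_vec_def by (rule norm_sum)
    also have "\<dots> \<le> (\<Sum>j<r. cmod (A i j))"
    proof (intro sum_mono)
      fix j assume "j \<in> {..<r}"
      then have "cmod (v j) \<le> 1" using norm_le_vnorm[of j r v] assms by simp
      then show "cmod (A i j * v j) \<le> cmod (A i j)" by (simp add: norm_mult mult_left_le)
    qed
    finally show ?thesis .
  qed
  then show ?thesis
    using vnorm_le_sum[of r "mat_vec r A v"] sum_mono[of "{..<r}"] by (meson order_trans)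
qed

lemma opnorm_eq: "opnorm r A = Sup {vnorm r (mat_vec r A v) | v. vnorm r v \<le> 1}"
  by (simp add: opnorm_def mat_vec_def)

lemma opnorm_upper: "vnorm r v \<le> 1 \<Longrightarrow> vnorm r (mat_vec r A v) \<le> opnorm r A"
  unfolding opnorm_eq
  by (rule cSup_upper) (auto simp: bdd_above_def intro: vnorm_mat_vec_le_sum)

lemma opnorm_least:
  "(\<And>v. vnorm r v \<le> 1 \<Longrightarrow> vnorm r (mat_vec r A v) \<le> B) \<Longrightarrow> opnorm r A \<le> B"
  unfolding opnorm_eq by (rule cSup_least) (auto intro: exI[of _ "\<lambda>i. 0"])

lemma opnorm_le_sum: "opnorm r A \<le> (\<Sum>i<r. \<Sum>j<r. cmod (A i j))"
  by (rule opnorm_least) (rule vnorm_mat_vec_le_sum)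

lemma opnorm_nonneg [simp]: "0 \<le> opnorm r A"
  using opnorm_upper[of r "\<lambda>i. 0" A] by (simp add: mat_vec_def)

lemma vnorm_mat_vec_le: "vnorm r (mat_vec r A v) \<le> opnorm r A * vnorm r v"
proof (cases "vnorm r v = 0")
  case True
  then have "vnorm r (mat_vec r A v) = vnorm r (\<lambda>i. 0)"
    by (intro vnorm_cong) (simp add: mat_vec_def vnorm_eq_0D)
  then show ?thesis by simp
next
  case False
  define c where "c = vnorm r v"
  have c: "c > 0" using False vnorm_nonneg[of r v] unfolding c_def by linarith
  have "vnorm r (\<lambda>i. of_real (1/c) * v i) = cmod (of_real (1/c)) * c"
    by (simp only: vnorm_scale c_def)
  then have "vnorm r (\<lambda>i. of_real (1/c) * v i) = 1"
    using c by (simp add: norm_divide)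
  then have "vnorm r (mat_vec r A (\<lambda>i. of_real (1/c) * v i)) \<le> opnorm r A"
    by (intro opnorm_upper) simp
  moreover have "mat_vec r A (\<lambda>i. of_real (1/c) * v i) = (\<lambda>i. of_real (1/c) * mat_vec r A v i)"
    by (simp add: mat_vec_def sum_distrib_left algebra_simps)
  ultimately have "cmod (of_real (1/c) :: complex) * vnorm r (mat_vec r A v) \<le> opnorm r A"
    by (metis vnorm_scale)
  then show ?thesis using c by (simp add: c_def norm_divide field_simps)
qed

lemma opnorm_cong:
  "(\<And>i j. i < r \<Longrightarrow> j < r \<Longrightarrow> A i j = B i j) \<Longrightarrow> opnorm r A = opnorm r B"
  unfolding opnorm_eq by (metis (no_types, lifting) mat_vec_def lessThan_iff sum.cong vnorm_cong)

lemma opnorm_zero: "(\<And>i j. i < r \<Longrightarrow> j < r \<Longrightarrow> A i j = 0) \<Longrightarrow> opnorm r A = 0"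
  using opnorm_cong[of r A "\<lambda>i j. 0"] opnorm_le_sum[of r "\<lambda>i j. 0"]
    opnorm_nonneg[of r "\<lambda>i j. 0"]
  by simp

lemma opnorm_diff_le: "opnorm r (A - B) \<le> opnorm r A + opnorm r B"
proof (rule opnorm_least)
  fix v :: "nat \<Rightarrow> complex" assume "vnorm r v \<le> 1"
  then show "vnorm r (mat_vec r (A - B) v) \<le> opnorm r A + opnorm r B"
    using vnorm_triangle[of r "mat_vec r A v" "mat_vec r B v"] opnorm_upper[of r v]
    by (simp add: mat_vec_diff) (meson add_mono order_trans)
qed

lemma opnorm_diff_commute: "opnorm r (A - B) = opnorm r (B - A)"
proof -
  have "vnorm r (mat_vec r (A - B) v) = vnorm r (mat_vec r (B - A) v)" for v
    by (simp add: vnorm_def mat_vec_diff norm_minus_commute)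
  then show ?thesis unfolding opnorm_eq by simp
qed

lemma opnorm_triangle: "opnorm r A \<le> opnorm r B + opnorm r (A - B)"
  using opnorm_diff_le[of r B "B - A"] opnorm_diff_commute[of r A B]
  by (simp add: fun_diff_def)

lemma opnorm_mmul_le: "opnorm r (mmul r A B) \<le> opnorm r A * opnorm r B"
proof (rule opnorm_least)
  fix v :: "nat \<Rightarrow> complex" assume v: "vnorm r v \<le> 1"
  have "vnorm r (mat_vec r (mmul r A B) v) \<le> opnorm r A * vnorm r (mat_vec r B v)"
    unfolding mat_vec_mmul by (rule vnorm_mat_vec_le)
  also have "\<dots> \<le> opnorm r A * opnorm r B"
    by (rule mult_left_mono[OF opnorm_upper[OF v]]) simp
  finally show "vnorm r (mat_vec r (mmul r A B) v) \<le> opnorm r A * opnorm r B" .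
qed

section \<open>Block diagonal, scalar and unitary matrices\<close>

lemma sum_grid:
  fixes h :: "nat \<Rightarrow> 'a::comm_monoid_add"
  shows "(\<Sum>I<r*l. h I) = (\<Sum>a<r. \<Sum>b<l. h (a*l+b))"
proof -
  have "sum h {c..<c+k} = (\<Sum>b<k. h (c+b))" for c k
    by (induct k) (auto simp: sum.atLeastLessThan_Suc)
  then show ?thesis using sum.nat_group[where g=h and k=l and n=r] by (simp add: mult.commute)
qed

text \<open>Block b occupies the indices a * l + b, as in the identification M_r \<otimes> M_l = M_(r*l)
  used by Gamma1 and umat.\<close>
definition blockdiag :: "nat \<Rightarrow> (nat \<Rightarrow> nat \<Rightarrow> nat \<Rightarrow> complex) \<Rightarrow> nat \<Rightarrow> nat \<Rightarrow> complex" where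
  "blockdiag l F = (\<lambda>I J. if I mod l = J mod l then F (I mod l) (I div l) (J div l) else 0)"

definition block_slice :: "nat \<Rightarrow> (nat \<Rightarrow> complex) \<Rightarrow> nat \<Rightarrow> nat \<Rightarrow> complex" where
  "block_slice l v b = (\<lambda>a. v (a*l+b))"

lemma mat_vec_blockdiag:
  assumes "0 < l"
  shows "mat_vec (r*l) (blockdiag l F) v I
       = mat_vec r (F (I mod l)) (block_slice l v (I mod l)) (I div l)"
proof -
  have "mat_vec (r*l) (blockdiag l F) v I
      = (\<Sum>a<r. \<Sum>c<l. blockdiag l F I (a*l+c) * v (a*l+c))"
    unfolding mat_vec_def by (rule sum_grid)
  also have "\<dots> = (\<Sum>a<r. \<Sum>c<l. if c = I mod l then F (I mod l) (I div l) a * v (a*l+I mod l) else 0)"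
    by (intro sum.cong refl) (auto simp: blockdiag_def)
  finally show ?thesis using assms by (simp add: mat_vec_def block_slice_def)
qed

lemma vnorm_power2_slices:
  assumes "0 < l"
  shows "(vnorm (r*l) v)\<^sup>2 = (\<Sum>b<l. (vnorm r (block_slice l v b))\<^sup>2)"
proof -
  have "(vnorm (r*l) v)\<^sup>2 = (\<Sum>a<r. \<Sum>b<l. (cmod (v (a*l+b)))\<^sup>2)"
    unfolding vnorm_power2 by (rule sum_grid)
  also have "\<dots> = (\<Sum>b<l. \<Sum>a<r. (cmod (v (a*l+b)))\<^sup>2)" by (rule sum.swap)
  finally show ?thesis by (simp add: vnorm_power2 block_slice_def)
qed

lemma vnorm_power2_blockdiag:
  assumes l: "0 < l"
  shows "(vnorm (r*l) (mat_vec (r*l) (blockdiag l F) v))\<^sup>2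
       = (\<Sum>b<l. (vnorm r (mat_vec r (F b) (block_slice l v b)))\<^sup>2)"
proof -
  have "block_slice l (mat_vec (r*l) (blockdiag l F) v) b = mat_vec r (F b) (block_slice l v b)"
    if "b < l" for b
    using that l by (auto simp: fun_eq_iff mat_vec_blockdiag block_slice_def)
  then show ?thesis by (simp add: vnorm_power2_slices[OF l])
qed

lemma opnorm_blockdiag_le:
  assumes l: "0 < l" and B: "\<And>b. b < l \<Longrightarrow> opnorm r (F b) \<le> B"
  shows "opnorm (r*l) (blockdiag l F) \<le> B"
proof (rule opnorm_least)
  fix v :: "nat \<Rightarrow> complex" assume v: "vnorm (r*l) v \<le> 1"
  have B0: "0 \<le> B" using B[OF l] opnorm_nonneg order_trans by blast
  have "(vnorm (r*l) (mat_vec (r*l) (blockdiag l F) v))\<^sup>2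
      = (\<Sum>b<l. (vnorm r (mat_vec r (F b) (block_slice l v b)))\<^sup>2)"
    by (rule vnorm_power2_blockdiag[OF l])
  also have "\<dots> \<le> (\<Sum>b<l. (B * vnorm r (block_slice l v b))\<^sup>2)"
  proof (rule sum_mono)
    fix b assume "b \<in> {..<l}"
    then have "vnorm r (mat_vec r (F b) (block_slice l v b)) \<le> B * vnorm r (block_slice l v b)"
      using B vnorm_mat_vec_le[of r "F b"] by (meson lessThan_iff mult_right_mono order_trans vnorm_nonneg)
    then show "(vnorm r (mat_vec r (F b) (block_slice l v b)))\<^sup>2 \<le> (B * vnorm r (block_slice l v b))\<^sup>2"
      by (simp add: power_mono)
  qed
  also have "\<dots> = B\<^sup>2 * (vnorm (r*l) v)\<^sup>2"
    by (simp add: vnorm_power2_slices[OF l] sum_distrib_left power_mult_distrib)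
  also have "\<dots> \<le> B\<^sup>2"
    using v by (simp add: mult_left_le power_le_one)
  finally show "vnorm (r*l) (mat_vec (r*l) (blockdiag l F) v) \<le> B"
    using B0 by (simp add: power2_le_iff_abs_le)
qed

lemma opnorm_blockdiag_ge:
  assumes b: "b < l"
  shows "opnorm r (F b) \<le> opnorm (r*l) (blockdiag l F)"
proof (rule opnorm_least)
  fix v :: "nat \<Rightarrow> complex" assume v: "vnorm r v \<le> 1"
  have l: "0 < l" using b by simp
  \<comment> \<open>embed v as the b-th slice of a vector of the same norm\<close>
  define V where "V = (\<lambda>J. if J mod l = b then v (J div l) else 0)"
  have slice: "block_slice l V c = (if c = b then v else (\<lambda>a. 0))" if "c < l" for c
    using that l by (auto simp: block_slice_def V_def)
  have "(vnorm (r*l) V)\<^sup>2 = (\<Sum>c<l. if c = b then (vnorm r v)\<^sup>2 else 0)"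
    unfolding vnorm_power2_slices[OF l] by (intro sum.cong refl) (simp add: slice)
  then have V: "vnorm (r*l) V \<le> 1" using v b by (simp add: power2_eq_iff_nonneg)
  have "mat_vec r (F c) (\<lambda>a. 0) = (\<lambda>a. 0)" for c by (simp add: mat_vec_def)
  then have "(vnorm (r*l) (mat_vec (r*l) (blockdiag l F) V))\<^sup>2
      = (\<Sum>c<l. if c = b then (vnorm r (mat_vec r (F b) v))\<^sup>2 else 0)"
    unfolding vnorm_power2_blockdiag[OF l] by (intro sum.cong refl) (simp add: slice)
  then have "vnorm r (mat_vec r (F b) v) = vnorm (r*l) (mat_vec (r*l) (blockdiag l F) V)"
    using b by (simp add: power2_eq_iff_nonneg)
  also have "\<dots> \<le> opnorm (r*l) (blockdiag l F)" by (rule opnorm_upper[OF V])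
  finally show "vnorm r (mat_vec r (F b) v) \<le> opnorm (r*l) (blockdiag l F)" .
qed

lemma mmul_blockdiag:
  assumes "0 < l"
  shows "mmul (r*l) (blockdiag l F) (blockdiag l G) = blockdiag l (\<lambda>b. mmul r (F b) (G b))"
proof (intro ext)
  fix I J
  have "mmul (r*l) (blockdiag l F) (blockdiag l G) I J
      = (\<Sum>a<r. \<Sum>c<l. blockdiag l F I (a*l+c) * blockdiag l G (a*l+c) J)"
    unfolding mmul_def by (rule sum_grid)
  also have "\<dots> = (\<Sum>a<r. \<Sum>c<l. if c = I mod l then
       (if I mod l = J mod l then F (I mod l) (I div l) a * G (I mod l) a (J div l) else 0) else 0)"
    by (intro sum.cong refl) (auto simp: blockdiag_def)
  finally show "mmul (r*l) (blockdiag l F) (blockdiag l G) I J = blockdiag l (\<lambda>b. mmul r (F b) (G b)) I J"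
    using assms by (simp add: blockdiag_def mmul_def)
qed

definition mscalar :: "complex \<Rightarrow> nat \<Rightarrow> nat \<Rightarrow> complex" where
  "mscalar c = (\<lambda>i j. if i = j then c else 0)"

lemma mmul_mscalar_left: "i < r \<Longrightarrow> mmul r (mscalar c) A i j = c * A i j"
  by (simp add: mmul_def mscalar_def if_distrib if_distribR cong: if_cong)

lemma mmul_mscalar_right: "j < r \<Longrightarrow> mmul r A (mscalar c) i j = A i j * c"
  by (simp add: mmul_def mscalar_def if_distrib if_distribR cong: if_cong)

lemma opnorm_mscalar_le: "opnorm r (mscalar c) \<le> cmod c"
proof (rule opnorm_least)
  fix v :: "nat \<Rightarrow> complex" assume v: "vnorm r v \<le> 1"
  have "vnorm r (mat_vec r (mscalar c) v) = vnorm r (\<lambda>i. c * v i)"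
    by (rule vnorm_cong) (simp add: mat_vec_def mscalar_def if_distrib if_distribR cong: if_cong)
  also have "\<dots> \<le> cmod c" using v by (simp add: vnorm_scale mult_left_le)
  finally show "vnorm r (mat_vec r (mscalar c) v) \<le> cmod c" .
qed

definition mcomm :: "nat \<Rightarrow> (nat \<Rightarrow> nat \<Rightarrow> complex) \<Rightarrow> (nat \<Rightarrow> nat \<Rightarrow> complex) \<Rightarrow> nat \<Rightarrow> nat \<Rightarrow> complex" where
  "mcomm r A B = mmul r A B - mmul r B A"

lemma mcomm_diff_right: "mcomm r A (B - C) = mcomm r A B - mcomm r A C"
  by (simp add: mcomm_def mmul_def fun_eq_iff algebra_simps sum_subtractf)

lemma opnorm_mcomm_le: "opnorm r (mcomm r A B) \<le> 2 * opnorm r A * opnorm r B"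
proof -
  have "opnorm r (mcomm r A B) \<le> opnorm r (mmul r A B) + opnorm r (mmul r B A)"
    unfolding mcomm_def by (rule opnorm_diff_le)
  also have "\<dots> \<le> opnorm r A * opnorm r B + opnorm r B * opnorm r A"
    by (intro add_mono opnorm_mmul_le)
  finally show ?thesis by simp
qed

lemma mcomm_mscalar: "i < r \<Longrightarrow> j < r \<Longrightarrow> mcomm r (mscalar c) A i j = 0"
  by (simp add: mcomm_def mmul_mscalar_left mmul_mscalar_right)

definition unitary_mat :: "nat \<Rightarrow> (nat \<Rightarrow> nat \<Rightarrow> complex) \<Rightarrow> bool" where
  "unitary_mat r U \<longleftrightarrow> (\<forall>i<r. \<forall>j<r. mmul r U (madj U) i j = (if i = j then 1 else 0))"

lemma unitary_mat_permutation:
  assumes "inj_on \<sigma> {..<l}" "\<sigma> ` {..<l} \<subseteq> {..<l}"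
    and P: "\<And>i j. i < l \<Longrightarrow> P i j = (if j = \<sigma> i then 1 else 0)"
  shows "unitary_mat l P"
proof -
  have "mmul l P (madj P) i j = (if i = j then 1 else 0)" if "i < l" "j < l" for i j
  proof -
    have "mmul l P (madj P) i j = (\<Sum>k<l. if k = \<sigma> i then (if \<sigma> i = \<sigma> j then 1 else 0) else 0)"
      unfolding mmul_def madj_def using that by (intro sum.cong refl) (simp add: P)
    then show ?thesis using assms that by (auto simp: inj_on_eq_iff)
  qed
  then show ?thesis by (simp add: unitary_mat_def)
qed

lemma unitary_mat_kron:
  assumes A: "unitary_mat r A" and B: "unitary_mat l B" and l: "0 < l"
  shows "unitary_mat (r*l) (\<lambda>I J. A (I div l) (J div l) * B (I mod l) (J mod l))"
  unfolding unitary_mat_def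
proof (intro allI impI)
  fix I J assume "I < r*l" "J < r*l"
  then have I: "I div l < r" "I mod l < l" and J: "J div l < r" "J mod l < l"
    using l by (simp_all add: less_mult_imp_div_less)
  let ?K = "\<lambda>I J. A (I div l) (J div l) * B (I mod l) (J mod l)"
  have "mmul (r*l) ?K (madj ?K) I J
      = (\<Sum>a<r. \<Sum>b<l. (A (I div l) a * cnj (A (J div l) a)) * (B (I mod l) b * cnj (B (J mod l) b)))"
    unfolding mmul_def madj_def sum_grid using l by (intro sum.cong refl) (simp add: algebra_simps)
  also have "\<dots> = mmul r A (madj A) (I div l) (J div l) * mmul l B (madj B) (I mod l) (J mod l)"
    by (simp add: mmul_def madj_def sum_product)
  also have "\<dots> = (if I = J then 1 else 0)"
    using A B I J by (auto simp: unitary_mat_def) (metis div_mult_mod_eq)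
  finally show "mmul (r*l) ?K (madj ?K) I J = (if I = J then 1 else 0)" .
qed

lemma unitary_mat_conj_mscalar:
  assumes "unitary_mat r U" "i < r" "j < r"
  shows "mmul r (mmul r U (mscalar c)) (madj U) i j = mscalar c i j"
proof -
  have "mmul r (mmul r U (mscalar c)) (madj U) i j = (\<Sum>l<r. U i l * c * madj U l j)"
    unfolding mmul_def[of r "mmul r U (mscalar c)"] by (intro sum.cong refl) (simp add: mmul_mscalar_right)
  also have "\<dots> = c * mmul r U (madj U) i j"
    by (simp add: mmul_def sum_distrib_left algebra_simps)
  finally have "mmul r (mmul r U (mscalar c)) (madj U) i j = c * mmul r U (madj U) i j" .
  then show ?thesis using assms by (simp add: unitary_mat_def mscalar_def)
qed

section \<open>Uniform norms of matrix-valued functions\<close>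

definition opbounded :: "nat \<Rightarrow> 'a set \<Rightarrow> ('a \<Rightarrow> nat \<Rightarrow> nat \<Rightarrow> complex) \<Rightarrow> bool" where
  "opbounded r S f \<longleftrightarrow> bdd_above ((\<lambda>q. opnorm r (f q)) ` S)"

definition supnorm :: "nat \<Rightarrow> 'a set \<Rightarrow> ('a \<Rightarrow> nat \<Rightarrow> nat \<Rightarrow> complex) \<Rightarrow> real" where
  "supnorm r S f = (SUP q\<in>S. opnorm r (f q))"

definition agree_on :: "nat \<Rightarrow> 'a set \<Rightarrow> ('a \<Rightarrow> nat \<Rightarrow> nat \<Rightarrow> complex) \<Rightarrow> ('a \<Rightarrow> nat \<Rightarrow> nat \<Rightarrow> complex) \<Rightarrow> bool" where
  "agree_on r S f g \<longleftrightarrow> (\<forall>q\<in>S. \<forall>i<r. \<forall>j<r. f q i j = g q i j)"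

lemma agree_on_refl [simp]: "agree_on r S f f"
  by (simp add: agree_on_def)

lemma opboundedI: "(\<And>q. q \<in> S \<Longrightarrow> opnorm r (f q) \<le> B) \<Longrightarrow> opbounded r S f"
  unfolding opbounded_def by (rule bdd_aboveI2)

lemma opboundedE:
  assumes "opbounded r S f"
  obtains B where "\<And>q. q \<in> S \<Longrightarrow> opnorm r (f q) \<le> B"
  using assms unfolding opbounded_def bdd_above_def by auto

lemma supnorm_upper: "opbounded r S f \<Longrightarrow> q \<in> S \<Longrightarrow> opnorm r (f q) \<le> supnorm r S f"
  unfolding supnorm_def opbounded_def by (rule cSUP_upper)

lemma supnorm_least:
  "S \<noteq> {} \<Longrightarrow> (\<And>q. q \<in> S \<Longrightarrow> opnorm r (f q) \<le> B) \<Longrightarrow> supnorm r S f \<le> B"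
  unfolding supnorm_def by (rule cSUP_least)

lemma supnorm_cong: "agree_on r S f g \<Longrightarrow> supnorm r S f = supnorm r S g"
  unfolding supnorm_def agree_on_def by (intro SUP_cong refl opnorm_cong) auto

lemma supnorm_zero: "S \<noteq> {} \<Longrightarrow> agree_on r S f (\<lambda>q i j. 0) \<Longrightarrow> supnorm r S f = 0"
  using supnorm_cong[of r S f "\<lambda>q i j. 0"] by (simp add: supnorm_def opnorm_zero)

lemma opbounded_diff:
  assumes "opbounded r S f" "opbounded r S g"
  shows "opbounded r S (f - g)"
proof -
  obtain Bf Bg where "\<And>q. q \<in> S \<Longrightarrow> opnorm r (f q) \<le> Bf" "\<And>q. q \<in> S \<Longrightarrow> opnorm r (g q) \<le> Bg"
    using assms by (auto elim!: opboundedE)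
  then show ?thesis
    by (intro opboundedI[of S r _ "Bf + Bg"]) (simp, meson add_mono opnorm_diff_le order_trans)
qed

lemma opbounded_mcomm:
  assumes "opbounded r S f" "opbounded r S g"
  shows "opbounded r S (\<lambda>q. mcomm r (f q) (g q))"
proof -
  obtain Bf Bg where f: "\<And>q. q \<in> S \<Longrightarrow> opnorm r (f q) \<le> Bf" and g: "\<And>q. q \<in> S \<Longrightarrow> opnorm r (g q) \<le> Bg"
    using assms by (auto elim!: opboundedE)
  have "opnorm r (mcomm r (f q) (g q)) \<le> 2 * Bf * Bg" if "q \<in> S" for q
  proof -
    have "opnorm r (f q) * opnorm r (g q) \<le> Bf * Bg"
      using f[OF that] g[OF that] order_trans[OF opnorm_nonneg f[OF that]] by (simp add: mult_mono)
    then show ?thesis using opnorm_mcomm_le[of r "f q" "g q"] by simp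
  qed
  then show ?thesis by (rule opboundedI)
qed

lemma supnorm_diff_abs:
  assumes S: "S \<noteq> {}" and f: "opbounded r S f" and g: "opbounded r S g"
  shows "\<bar>supnorm r S f - supnorm r S g\<bar> \<le> supnorm r S (f - g)"
proof -
  have le: "supnorm r S f \<le> supnorm r S g + supnorm r S (f - g)"
    if f: "opbounded r S f" and g: "opbounded r S g" for f g
  proof (rule supnorm_least[OF S])
    fix q assume q: "q \<in> S"
    show "opnorm r (f q) \<le> supnorm r S g + supnorm r S (f - g)"
      using opnorm_triangle[of r "f q" "g q"] supnorm_upper[OF g q] supnorm_upper[OF opbounded_diff[OF f g] q]
      by simp
  qed
  have "supnorm r S (g - f) = supnorm r S (f - g)"
    unfolding supnorm_def using opnorm_diff_commute by simp
  then show ?thesis using le[OF f g] le[OF g f] by linarith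
qed

lemma supnorm_mcomm_le:
  assumes S: "S \<noteq> {}" and f: "opbounded r S f" and g: "opbounded r S g"
  shows "supnorm r S (\<lambda>q. mcomm r (f q) (g q)) \<le> 2 * supnorm r S f * supnorm r S g"
proof (rule supnorm_least[OF S])
  fix q assume q: "q \<in> S"
  have "opnorm r (mcomm r (f q) (g q)) \<le> 2 * opnorm r (f q) * opnorm r (g q)"
    by (rule opnorm_mcomm_le)
  also have "\<dots> \<le> 2 * supnorm r S f * supnorm r S g"
    using supnorm_upper[OF f q] supnorm_upper[OF g q]
    by (intro mult_mono) (auto intro: order_trans[OF opnorm_nonneg])
  finally show "opnorm r (mcomm r (f q) (g q)) \<le> 2 * supnorm r S f * supnorm r S g" .
qed

lemma opbounded_continuous:
  assumes "compact S" and "\<And>i j. i < r \<Longrightarrow> j < r \<Longrightarrow> continuous_on S (\<lambda>q. f q i j)"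
  shows "opbounded r S f"
proof -
  have "\<exists>B. \<forall>q\<in>S. cmod (f q i j) \<le> B" if "i < r" "j < r" for i j
    using compact_imp_bounded[OF compact_continuous_image[OF assms(2)[OF that] assms(1)]]
    by (auto simp: bounded_iff)
  then obtain B where B: "\<And>i j q. i < r \<Longrightarrow> j < r \<Longrightarrow> q \<in> S \<Longrightarrow> cmod (f q i j) \<le> B i j"
    by metis
  show ?thesis
  proof (rule opboundedI)
    fix q assume "q \<in> S"
    then have "(\<Sum>i<r. \<Sum>j<r. cmod (f q i j)) \<le> (\<Sum>i<r. \<Sum>j<r. B i j)"
      by (intro sum_mono) (simp add: B)
    then show "opnorm r (f q) \<le> (\<Sum>i<r. \<Sum>j<r. B i j)"
      using opnorm_le_sum[of r "f q"] by linarith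
  qed
qed

section \<open>The connecting maps are isometric\<close>

definition XZ :: "(nat \<Rightarrow> nat) \<Rightarrow> nat \<Rightarrow> pt set" where
  "XZ d n = Xsp d n \<times> Zn n"

lemma compact_Xsp: "compact (Xsp d n)"
proof -
  have "x \<in> Xsp d n \<longleftrightarrow> (\<forall>i. x i \<in> (if i < sS d n then sphere 0 1 else {0}))" for x
    unfolding Xsp_def by (auto simp: not_less)
  then have "Xsp d n = PiE UNIV (\<lambda>i. if i < sS d n then sphere 0 1 else {0})"
    by (auto simp: PiE_UNIV_domain Pi_iff)
  moreover have "compactin (product_topology (\<lambda>i. euclidean) UNIV)
      (PiE UNIV (\<lambda>i. if i < sS d n then sphere (0::real^3) 1 else {0}))"
    by (subst compactin_PiE) auto
  ultimately show ?thesis by (simp add: euclidean_product_topology)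
qed

lemma compact_XZ: "compact (XZ d n)"
  unfolding XZ_def Zn_def by (intro compact_Times compact_Xsp finite_imp_compact) auto

lemma Cnorm_eq_supnorm: "Cnorm d n f = supnorm (rR d n) (XZ d n) f"
  by (simp add: Cnorm_def supnorm_def XZ_def)

lemma Cn_car_opbounded: "f \<in> Cn_car d n \<Longrightarrow> opbounded (rR d n) (XZ d n) f"
  by (rule opbounded_continuous[OF compact_XZ]) (simp add: Cn_car_def XZ_def)

lemma lL_Suc: "lL d (Suc n) = d (Suc n) + 2 ^ n"
  by (simp add: lL_def)

lemma lL_pos: "0 < lL d n"
  by (simp add: lL_def)

lemma rR_Suc: "rR d (Suc n) = rR d n * lL d (Suc n)"
  by (simp add: rR_def)

lemma sS_Suc: "sS d (Suc n) = sS d n * d (Suc n)"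
  by (simp add: sS_def)

lemma Gamma1_blockdiag: "Gamma1 d xs n f p = blockdiag (lL d (Suc n)) (\<lambda>b. f (Smap d xs n (b+1) p))"
  by (simp add: Gamma1_def blockdiag_def fun_eq_iff)

lemma Gamma1_diff: "Gamma1 d xs n (f - g) = Gamma1 d xs n f - Gamma1 d xs n g"
  by (simp add: Gamma1_def fun_eq_iff)

lemma Gamma1_mscalar: "Gamma1 d xs n (\<lambda>p. mscalar c) = (\<lambda>p. mscalar c)"
  by (auto simp: Gamma1_def mscalar_def fun_eq_iff) (metis div_mult_mod_eq)

lemma GamK_add: "GamK d xs n (k1 + k2) f = GamK d xs (n + k1) k2 (GamK d xs n k1 f)"
  by (induct k2) (simp_all add: add.assoc)

lemma GamK_diff: "GamK d xs n k (f - g) = GamK d xs n k f - GamK d xs n k g"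
  by (induct k) (simp_all only: GamK.simps Gamma1_diff)

lemma GamK_mscalar: "GamK d xs n k (\<lambda>p. mscalar c) = (\<lambda>p. mscalar c)"
  by (induct k) (simp_all add: Gamma1_mscalar)

lemma Gamma1_mmul:
  "Gamma1 d xs n (\<lambda>p. mmul (rR d n) (f p) (g p))
     = (\<lambda>p. mmul (rR d (Suc n)) (Gamma1 d xs n f p) (Gamma1 d xs n g p))"
  by (rule ext) (simp add: Gamma1_blockdiag rR_Suc mmul_blockdiag[OF lL_pos])

lemma GamK_mmul:
  "GamK d xs n k (\<lambda>p. mmul (rR d n) (f p) (g p))
     = (\<lambda>p. mmul (rR d (n+k)) (GamK d xs n k f p) (GamK d xs n k g p))"
  by (induct k) (simp_all add: Gamma1_mmul)

locale construction =
  fixes d :: "nat \<Rightarrow> nat" and xs :: "nat \<Rightarrow> (nat \<Rightarrow> real^3)"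
  assumes xs_in: "\<And>m. xs m \<in> Xsp d m" and d_pos: "\<And>n. 0 < d n"
begin

lemma XZ_nonempty: "XZ d n \<noteq> {}"
proof -
  have "(xs n, 0) \<in> XZ d n" using xs_in[of n] by (simp add: XZ_def Zn_def)
  then show ?thesis by blast
qed

lemma Smap_in_XZ:
  assumes p: "p \<in> XZ d (Suc n)" and b: "b < lL d (Suc n)"
  shows "Smap d xs n (b+1) p \<in> XZ d n"
proof (cases "b + 1 \<le> d (Suc n)")
  case True
  obtain x z where pz: "p = (x, z)" by (cases p)
  have x: "x \<in> Xsp d (Suc n)" using p pz by (simp add: XZ_def)
  have "x (b * sS d n + i) \<in> sphere 0 1" if "i < sS d n" for i
  proof -
    have "b * sS d n + i < (b+1) * sS d n" using that by simp
    also have "\<dots> \<le> d (Suc n) * sS d n" using True by (intro mult_le_mono1)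
    finally show ?thesis using x by (simp add: Xsp_def sS_Suc mult.commute)
  qed
  then have "proj d n (b+1) x \<in> Xsp d n" by (simp add: Xsp_def proj_def)
  then show ?thesis using True by (simp add: Smap_def pz XZ_def Zn_def)
next
  case False
  then show ?thesis using b xs_in[of n] by (auto simp: Smap_def XZ_def Zn_def lL_Suc)
qed

lemma Smap_first_surj:
  assumes "q \<in> XZ d n"
  obtains p where "p \<in> XZ d (Suc n)" "Smap d xs n 1 p = q"
proof -
  obtain y z where q: "q = (y, z)" "y \<in> Xsp d n" "z < 2 ^ n"
    using assms by (cases q) (auto simp: XZ_def Zn_def)
  \<comment> \<open>extend y by an arbitrary point of the sphere in the new coordinates\<close>
  define x where "x = (\<lambda>i. if i < sS d n then y i else if i < sS d (Suc n) then axis 1 1 else (0::real^3))"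
  have "sS d n \<le> sS d (Suc n)" using d_pos[of "Suc n"] by (simp add: sS_Suc)
  then have "x \<in> Xsp d (Suc n)" using q by (auto simp: Xsp_def x_def)
  moreover have "proj d n 1 x = y"
    using q by (auto simp: proj_def x_def fun_eq_iff Xsp_def)
  ultimately show ?thesis
    using that[of "(x, z)"] q d_pos[of "Suc n"] by (simp add: Smap_def XZ_def Zn_def Suc_le_eq)
qed

lemma opnorm_Gamma1_le:
  assumes "\<And>p. p \<in> XZ d n \<Longrightarrow> opnorm (rR d n) (f p) \<le> B" and "q \<in> XZ d (Suc n)"
  shows "opnorm (rR d (Suc n)) (Gamma1 d xs n f q) \<le> B"
  unfolding Gamma1_blockdiag rR_Suc
  by (rule opnorm_blockdiag_le[OF lL_pos]) (rule assms(1)[OF Smap_in_XZ[OF assms(2)]])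

lemma opbounded_Gamma1:
  "opbounded (rR d n) (XZ d n) f \<Longrightarrow> opbounded (rR d (Suc n)) (XZ d (Suc n)) (Gamma1 d xs n f)"
  by (erule opboundedE, rule opboundedI, rule opnorm_Gamma1_le)

lemma Cnorm_Gamma1:
  assumes f: "opbounded (rR d n) (XZ d n) f"
  shows "Cnorm d (Suc n) (Gamma1 d xs n f) = Cnorm d n f"
proof (rule antisym)
  show "Cnorm d (Suc n) (Gamma1 d xs n f) \<le> Cnorm d n f"
    unfolding Cnorm_eq_supnorm
    by (intro supnorm_least XZ_nonempty opnorm_Gamma1_le supnorm_upper[OF f])
  show "Cnorm d n f \<le> Cnorm d (Suc n) (Gamma1 d xs n f)"
    unfolding Cnorm_eq_supnorm
  proof (rule supnorm_least[OF XZ_nonempty])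
    fix q assume "q \<in> XZ d n"
    then obtain p where p: "p \<in> XZ d (Suc n)" "Smap d xs n 1 p = q" by (rule Smap_first_surj)
    \<comment> \<open>the first block of Gamma1 f at p is f q\<close>
    have "opnorm (rR d n) (f q) \<le> opnorm (rR d (Suc n)) (Gamma1 d xs n f p)"
      using opnorm_blockdiag_ge[OF lL_pos[of d "Suc n"], where F="\<lambda>b. f (Smap d xs n (b+1) p)"
          and r="rR d n"] p(2)
      by (simp add: Gamma1_blockdiag rR_Suc)
    also have "\<dots> \<le> supnorm (rR d (Suc n)) (XZ d (Suc n)) (Gamma1 d xs n f)"
      by (rule supnorm_upper[OF opbounded_Gamma1[OF f] p(1)])
    finally show "opnorm (rR d n) (f q) \<le> supnorm (rR d (Suc n)) (XZ d (Suc n)) (Gamma1 d xs n f)" .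
  qed
qed

lemma opbounded_GamK:
  "opbounded (rR d n) (XZ d n) f \<Longrightarrow> opbounded (rR d (n+k)) (XZ d (n+k)) (GamK d xs n k f)"
  by (induct k) (simp_all add: opbounded_Gamma1)

lemma Cnorm_GamK:
  "opbounded (rR d n) (XZ d n) f \<Longrightarrow> Cnorm d (n+k) (GamK d xs n k f) = Cnorm d n f"
  by (induct k) (simp_all add: Cnorm_Gamma1 opbounded_GamK)

end

section \<open>Commutators in the inductive limit\<close>

definition lcomm :: "(nat \<Rightarrow> nat) \<Rightarrow> (nat \<Rightarrow> (nat \<Rightarrow> real^3)) \<Rightarrow> lelt \<Rightarrow> lelt \<Rightarrow> lelt" where
  "lcomm d xs e x = lminus d xs (lmul d xs e x) (lmul d xs x e)"

lemma lbin_same_level: "lbin d xs op (n, f) (n, g) = (n, op n f g)"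
  by (simp add: lbin_def llift_def)

lemma lminus_same_level: "lminus d xs (n, f) (n, g) = (n, f - g)"
  by (simp add: lminus_def lbin_same_level fun_eq_iff)

lemma lmul_same_level: "lmul d xs (n, f) (n, g) = (n, \<lambda>p. mmul (rR d n) (f p) (g p))"
  by (simp add: lmul_def lbin_same_level)

lemma ldist_eq: "ldist d xs x y = Cnorm d (max (fst x) (fst y))
    (llift d xs (max (fst x) (fst y)) x - llift d xs (max (fst x) (fst y)) y)"
  by (simp add: ldist_def lminus_def lbin_def lnorm_def Let_def fun_diff_def)

lemma lcomm_eq: "lcomm d xs e x = (max (fst e) (fst x),
    \<lambda>q. mcomm (rR d (max (fst e) (fst x))) (llift d xs (max (fst e) (fst x)) e q)
                                          (llift d xs (max (fst e) (fst x)) x q))"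
  by (simp add: lcomm_def lmul_def lbin_def lminus_same_level Let_def max.commute mcomm_def fun_eq_iff)

lemma GamK_mcomm:
  "GamK d xs n k (\<lambda>q. mcomm (rR d n) (f q) (g q))
     = (\<lambda>q. mcomm (rR d (n+k)) (GamK d xs n k f q) (GamK d xs n k g q))"
proof -
  have "(\<lambda>q. mcomm r (f q) (g q)) = (\<lambda>q. mmul r (f q) (g q)) - (\<lambda>q. mmul r (g q) (f q))"
    for r :: nat and f g :: cfun
    by (simp add: mcomm_def fun_eq_iff)
  then show ?thesis by (simp only: GamK_diff GamK_mmul)
qed

context construction begin

lemma llift_llift:
  "fst e \<le> m \<Longrightarrow> m \<le> K \<Longrightarrow> GamK d xs m (K - m) (llift d xs m e) = llift d xs K e"
  using GamK_add[of d xs "fst e" "m - fst e" "K - m" "snd e"] by (simp add: llift_def)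

lemma opbounded_llift:
  "lvalid d e \<Longrightarrow> fst e \<le> K \<Longrightarrow> opbounded (rR d K) (XZ d K) (llift d xs K e)"
  using opbounded_GamK[OF Cn_car_opbounded[of "snd e" d "fst e"], of "K - fst e"]
  by (simp add: lvalid_def llift_def)

lemma Cnorm_llift: "lvalid d e \<Longrightarrow> fst e \<le> K \<Longrightarrow> Cnorm d K (llift d xs K e) = lnorm d e"
  using Cnorm_GamK[OF Cn_car_opbounded[of "snd e" d "fst e"], of "K - fst e"]
  by (simp add: lvalid_def llift_def lnorm_def)

lemma lnorm_nonneg: "lvalid d e \<Longrightarrow> 0 \<le> lnorm d e"
  using Cnorm_llift[of e "fst e"] supnorm_upper[OF opbounded_llift[of e "fst e"]] XZ_nonempty
  by (simp add: Cnorm_eq_supnorm) (meson all_not_in_conv opnorm_nonneg order_trans)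

lemma Cnorm_lift_to:
  assumes "opbounded (rR d m) (XZ d m) h" "m \<le> K"
  shows "Cnorm d K (GamK d xs m (K - m) h) = Cnorm d m h"
  using Cnorm_GamK[OF assms(1), of "K - m"] assms(2) by simp

lemma ldist_llift:
  assumes x: "lvalid d x" and y: "lvalid d y" and K: "fst x \<le> K" "fst y \<le> K"
  shows "ldist d xs x y = Cnorm d K (llift d xs K x - llift d xs K y)"
proof -
  let ?m = "max (fst x) (fst y)"
  have "opbounded (rR d ?m) (XZ d ?m) (llift d xs ?m x - llift d xs ?m y)"
    using x y by (intro opbounded_diff opbounded_llift) auto
  then have "ldist d xs x y = Cnorm d K (GamK d xs ?m (K - ?m) (llift d xs ?m x - llift d xs ?m y))"
    unfolding ldist_eq using K by (simp add: Cnorm_lift_to)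
  also have "\<dots> = Cnorm d K (llift d xs K x - llift d xs K y)"
    using K by (simp add: GamK_diff llift_llift)
  finally show ?thesis .
qed

lemma lnorm_lcomm_llift:
  assumes e: "lvalid d e" and x: "lvalid d x" and K: "fst e \<le> K" "fst x \<le> K"
  shows "lnorm d (lcomm d xs e x)
       = Cnorm d K (\<lambda>q. mcomm (rR d K) (llift d xs K e q) (llift d xs K x q))"
proof -
  let ?m = "max (fst e) (fst x)"
  have "opbounded (rR d ?m) (XZ d ?m) (\<lambda>q. mcomm (rR d ?m) (llift d xs ?m e q) (llift d xs ?m x q))"
    using e x by (intro opbounded_mcomm opbounded_llift) auto
  then have "lnorm d (lcomm d xs e x) = Cnorm d K (GamK d xs ?m (K - ?m)
      (\<lambda>q. mcomm (rR d ?m) (llift d xs ?m e q) (llift d xs ?m x q)))"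
    unfolding lcomm_eq lnorm_def using K by (simp add: Cnorm_lift_to)
  also have "\<dots> = Cnorm d K (\<lambda>q. mcomm (rR d K) (llift d xs K e q) (llift d xs K x q))"
    using K by (simp add: GamK_mcomm llift_llift)
  finally show ?thesis .
qed

lemma lnorm_lcomm_lipschitz:
  assumes e: "lvalid d e" and x: "lvalid d x" and y: "lvalid d y"
  shows "\<bar>lnorm d (lcomm d xs e x) - lnorm d (lcomm d xs e y)\<bar> \<le> 2 * lnorm d e * ldist d xs x y"
proof -
  define K where "K = max (fst e) (max (fst x) (fst y))"
  let ?r = "rR d K" and ?S = "XZ d K"
  define E X Y where "E = llift d xs K e" and "X = llift d xs K x" and "Y = llift d xs K y"
  have K: "fst e \<le> K" "fst x \<le> K" "fst y \<le> K" by (auto simp: K_def)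
  have bE: "opbounded ?r ?S E" and bX: "opbounded ?r ?S X" and bY: "opbounded ?r ?S Y"
    unfolding E_def X_def Y_def using e x y K by (auto intro: opbounded_llift)
  have nE: "supnorm ?r ?S E = lnorm d e"
    using Cnorm_llift[OF e K(1)] by (simp add: Cnorm_eq_supnorm E_def)
  have nXY: "supnorm ?r ?S (X - Y) = ldist d xs x y"
    using ldist_llift[OF x y K(2,3)] by (simp add: Cnorm_eq_supnorm X_def Y_def)
  have "\<bar>lnorm d (lcomm d xs e x) - lnorm d (lcomm d xs e y)\<bar>
      = \<bar>supnorm ?r ?S (\<lambda>q. mcomm ?r (E q) (X q)) - supnorm ?r ?S (\<lambda>q. mcomm ?r (E q) (Y q))\<bar>"
    using e x y K by (simp add: lnorm_lcomm_llift Cnorm_eq_supnorm E_def X_def Y_def)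
  also have "\<dots> \<le> supnorm ?r ?S ((\<lambda>q. mcomm ?r (E q) (X q)) - (\<lambda>q. mcomm ?r (E q) (Y q)))"
    by (intro supnorm_diff_abs XZ_nonempty opbounded_mcomm bE bX bY)
  also have "(\<lambda>q. mcomm ?r (E q) (X q)) - (\<lambda>q. mcomm ?r (E q) (Y q)) = (\<lambda>q. mcomm ?r (E q) ((X - Y) q))"
    by (simp add: fun_eq_iff mcomm_diff_right[symmetric])
  also have "supnorm ?r ?S \<dots> \<le> 2 * supnorm ?r ?S E * supnorm ?r ?S (X - Y)"
    by (intro supnorm_mcomm_le XZ_nonempty bE opbounded_diff bX bY)
  finally show ?thesis unfolding nE nXY .
qed

lemma lnorm_lcomm_mscalar:
  assumes "fst x \<le> n"
  shows "lnorm d (lcomm d xs (n, \<lambda>q. mscalar (c q)) x) = 0"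
proof -
  have "lcomm d xs (n, \<lambda>q. mscalar (c q)) x = (n, \<lambda>q. mcomm (rR d n) (mscalar (c q)) (llift d xs n x q))"
    using assms by (simp add: lcomm_eq max_absorb1 llift_def)
  then show ?thesis
    by (simp add: lnorm_def Cnorm_eq_supnorm supnorm_zero XZ_nonempty agree_on_def mcomm_mscalar)
qed

lemma CnormC_commutator_le:
  assumes e: "lvalid d e" and a: "a \<in> Ccar d xs"
    and close: "\<And>i. N0 \<le> i \<Longrightarrow> ldist d xs (a i) (a N0) \<le> \<delta>"
    and central: "lnorm d (lcomm d xs e (a N0)) = 0"
  shows "CnormC d (Cminus d xs (Cmul d xs (\<lambda>i. e) a) (Cmul d xs a (\<lambda>i. e))) \<le> 2 * lnorm d e * \<delta>"
proof -
  define T where "T = (\<lambda>i. lnorm d (lcomm d xs e (a i)))"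
  have valid: "\<And>i. lvalid d (a i)" using a by (simp add: Ccar_def)
  have T_diff: "\<bar>T i - T j\<bar> \<le> 2 * lnorm d e * ldist d xs (a i) (a j)" for i j
    unfolding T_def by (rule lnorm_lcomm_lipschitz[OF e valid valid])
  have "Cauchy T"
  proof (rule CauchyI)
    fix \<epsilon> :: real assume "0 < \<epsilon>"
    define \<eta> where "\<eta> = \<epsilon> / (2 * lnorm d e + 1)"
    have L: "0 \<le> lnorm d e" by (rule lnorm_nonneg[OF e])
    then have "0 < \<eta>" using \<open>0 < \<epsilon>\<close> by (simp add: \<eta>_def)
    with a obtain M where M: "\<forall>i\<ge>M. \<forall>j\<ge>M. ldist d xs (a i) (a j) < \<eta>"
      by (auto simp: Ccar_def)
    have "norm (T i - T j) < \<epsilon>" if "M \<le> i" "M \<le> j" for i j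
    proof -
      have "2 * lnorm d e * ldist d xs (a i) (a j) \<le> 2 * lnorm d e * \<eta>"
        using M that L by (intro mult_left_mono) (auto simp: less_imp_le)
      also have "\<dots> < \<epsilon>" using \<open>0 < \<epsilon>\<close> L by (simp add: \<eta>_def field_simps)
      finally show ?thesis using T_diff[of i j] by simp
    qed
    then show "\<exists>M. \<forall>m\<ge>M. \<forall>n\<ge>M. norm (T m - T n) < \<epsilon>" by blast
  qed
  then have "T \<longlonglongrightarrow> lim T" by (simp add: Cauchy_convergent_iff convergent_LIMSEQ_iff)
  moreover have "T i \<le> 2 * lnorm d e * \<delta>" if "N0 \<le> i" for i
    using T_diff[of i N0] close[OF that] central lnorm_nonneg[OF e]
    by (simp add: T_def) (smt (verit) mult_left_mono)
  ultimately have "lim T \<le> 2 * lnorm d e * \<delta>" by (intro LIMSEQ_le_const2) auto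
  then show ?thesis by (simp add: T_def CnormC_def Cminus_def Cmul_def lcomm_def)
qed

end

section \<open>The Rokhlin tower\<close>

lemma unitary_vmat: "unitary_mat (lL d (Suc n)) (vmat d (Suc n))"
proof (rule unitary_mat_permutation)
  define \<sigma> where "\<sigma> i = (if i < d (Suc n) then i else if i + 1 < lL d (Suc n) then i + 1 else d (Suc n))" for i
  show "inj_on \<sigma> {..<lL d (Suc n)}" "\<sigma> ` {..<lL d (Suc n)} \<subseteq> {..<lL d (Suc n)}"
    by (auto simp: inj_on_def \<sigma>_def lL_Suc)
  have "Suc i < d (Suc n) + 2 ^ n" if "i < d (Suc n)" for i
    using that zero_less_power[of "2::nat" n] by linarith
  then show "vmat d (Suc n) i j = (if j = \<sigma> i then 1 else 0)" if "i < lL d (Suc n)" for i j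
    using that by (auto simp: vmat_def \<sigma>_def lL_Suc)
qed

lemma unitary_umat: "unitary_mat (rR d n) (umat d n)"
proof (induct n)
  case 0
  then show ?case by (simp add: unitary_mat_def rR_def lL_def mmul_def madj_def)
next
  case (Suc n)
  then show ?case
    unfolding rR_Suc umat.simps by (rule unitary_mat_kron[OF _ unitary_vmat lL_pos])
qed

lemma alphan_mscalar:
  assumes "i < rR d n" "j < rR d n"
  shows "alphan d n (\<lambda>q. mscalar (s q)) q i j = mscalar (s (fst q, (snd q + 1) mod 2 ^ n)) i j"
  using unitary_mat_conj_mscalar[OF unitary_umat assms] by (simp add: alphan_def)

definition zindicator :: "nat \<Rightarrow> cfun" where
  "zindicator c = (\<lambda>q. mscalar (if snd q = c then 1 else 0))"

lemma zindicator_Cn_car: "zindicator c \<in> Cn_car d n"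
proof -
  have "continuous_on S (\<lambda>q::pt. g (snd q))" for S and g :: "nat \<Rightarrow> complex"
    using continuous_on_compose[OF continuous_on_snd[OF continuous_on_id]
        Topological_Spaces.continuous_on_discrete, of S g]
    by (simp add: o_def)
  from this[of _ "\<lambda>z. mscalar (if z = c then 1 else 0) _ _"]
  show ?thesis by (simp add: Cn_car_def zindicator_def)
qed

lemma reversed_index_shift:
  fixes M k z :: nat
  assumes "k < M" "z < M"
  shows "(z + 1) mod M = M - 1 - k \<longleftrightarrow> z = M - 1 - (k + 1) mod M"
proof (cases "z + 1 = M")
  case True
  then show ?thesis using assms by (cases "k + 1 = M") auto
next
  case False
  then have "(z + 1) mod M = z + 1" using assms by simp
  then show ?thesis using assms by (cases "k + 1 = M") auto
qed

lemma Csum_same_level: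
  assumes "\<And>k. p k = (\<lambda>i. (n, f k))" and "0 < m"
  shows "Csum d xs p m = (\<lambda>i. (n, \<lambda>q I J. \<Sum>k<m. f k q I J))"
  using assms(2)
proof (induct m)
  case (Suc m)
  have zero: "(\<lambda>p k l. 0) = (\<lambda>p. mscalar 0)" by (simp add: mscalar_def fun_eq_iff)
  show ?case
  proof (cases "m = 0")
    case True
    then show ?thesis
      by (simp add: assms(1) Cadd_def Czero_def ladd_def lbin_def llift_def zero GamK_mscalar)
        (simp add: mscalar_def)
  next
    case False
    then show ?thesis using Suc by (simp add: assms(1) Cadd_def ladd_def lbin_same_level)
  qed
qed simp

lemma Ccar_finite_level_approx:
  assumes "finite F" "F \<subseteq> Ccar d xs" "0 < \<delta>"
  obtains L where "\<And>a. a \<in> F \<Longrightarrow> \<exists>N0. fst (a N0) \<le> L \<and> (\<forall>i\<ge>N0. ldist d xs (a i) (a N0) < \<delta>)"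
proof -
  have "\<forall>a\<in>F. \<exists>N0. \<forall>i\<ge>N0. ldist d xs (a i) (a N0) < \<delta>"
    using assms(2,3) unfolding Ccar_def by blast
  then obtain N0 where N0: "\<And>a i. a \<in> F \<Longrightarrow> N0 a \<le> i \<Longrightarrow> ldist d xs (a i) (a (N0 a)) < \<delta>"
    by metis
  have "fst (a (N0 a)) \<le> (\<Sum>b\<in>F. fst (b (N0 b)))" if "a \<in> F" for a
    using member_le_sum[OF that _ assms(1), of "\<lambda>b. fst (b (N0 b))"] by simp
  with N0 show ?thesis using that by blast
qed

lemma CnormC_const: "CnormC d (\<lambda>i. e) = lnorm d e"
  by (simp add: CnormC_def)

context construction begin

lemma lvalid_const_Ccar: "lvalid d e \<Longrightarrow> (\<lambda>i. e) \<in> Ccar d xs"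
  using ldist_llift[of e e "fst e"]
  by (simp add: Ccar_def Cnorm_eq_supnorm supnorm_zero XZ_nonempty agree_on_def)

lemma Ceq_same_level:
  "agree_on (rR d n) (XZ d n) f g \<Longrightarrow> Ceq d xs (\<lambda>i. (n, f)) (\<lambda>i. (n, g))"
  by (simp add: Ceq_def ldist_def lminus_same_level lnorm_def Cnorm_eq_supnorm supnorm_zero
      XZ_nonempty agree_on_def)

lemma Ceq_Cone:
  assumes "agree_on (rR d n) (XZ d n) f (\<lambda>q. mscalar 1)"
  shows "Ceq d xs (\<lambda>i. (n, f)) Cone"
proof -
  have "Cone i = (0, \<lambda>q. mscalar 1)" for i by (simp add: Cone_def mscalar_def)
  then have "ldist d xs (n, f) (Cone i) = Cnorm d n (f - (\<lambda>q. mscalar 1))" for i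
    by (simp add: ldist_eq llift_def GamK_mscalar)
  then show ?thesis using assms
    by (simp add: Ceq_def Cnorm_eq_supnorm supnorm_zero XZ_nonempty agree_on_def)
qed

lemma lnorm_zindicator_le: "lnorm d (n, zindicator c) \<le> 1"
proof -
  have "opnorm (rR d n) (zindicator c q) \<le> 1" for q
    using opnorm_mscalar_le[of "rR d n" "if snd q = c then 1 else 0"]
    by (cases "snd q = c") (simp_all add: zindicator_def)
  then show ?thesis unfolding lnorm_def Cnorm_eq_supnorm by (simp add: supnorm_least XZ_nonempty)
qed

lemma Cproj_zindicator: "Cproj d xs (\<lambda>i. (n, zindicator c))"
proof -
  have "agree_on (rR d n) (XZ d n) (\<lambda>p. mmul (rR d n) (zindicator c p) (zindicator c p)) (zindicator c)"
    unfolding agree_on_def zindicator_def by (simp add: mmul_mscalar_left, simp add: mscalar_def)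
  moreover have "(\<lambda>p. madj (zindicator c p)) = zindicator c"
    by (simp add: fun_eq_iff zindicator_def madj_def mscalar_def)
  ultimately show ?thesis
    using Ceq_same_level lvalid_const_Ccar zindicator_Cn_car
    by (simp add: Cproj_def Cmul_def lmul_same_level Cstar_def lstar_def lvalid_def)
qed

text \<open>Since alpha shifts the Z_(2^n)-coordinate by +1, it maps the indicator of c to that of c - 1;
  the tower therefore runs down the cycle.\<close>
definition rokhlin_tower :: "nat \<Rightarrow> nat \<Rightarrow> celt" where
  "rokhlin_tower n k = (\<lambda>i. (n, zindicator (2 ^ n - 1 - k)))"

lemma Csum_rokhlin_tower: "Ceq d xs (Csum d xs (rokhlin_tower n) (2 ^ n)) Cone"
proof -
  define M :: nat where "M = 2 ^ n"
  have "agree_on (rR d n) (XZ d n) (\<lambda>q I J. \<Sum>k<M. zindicator (M - 1 - k) q I J) (\<lambda>q. mscalar 1)"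
    unfolding agree_on_def
  proof (intro ballI allI impI)
    fix q I J assume "q \<in> XZ d n"
    then have z: "snd q < M" by (auto simp: XZ_def Zn_def M_def)
    have "(\<Sum>k<M. zindicator (M - 1 - k) q I J) = (\<Sum>k<M. if k = M - 1 - snd q then mscalar 1 I J else 0)"
      using z by (intro sum.cong refl) (auto simp: zindicator_def mscalar_def)
    then show "(\<Sum>k<M. zindicator (M - 1 - k) q I J) = mscalar 1 I J" using z by simp
  qed
  then show ?thesis
    using Ceq_Cone Csum_same_level[of "rokhlin_tower n" n "\<lambda>k. zindicator (M - 1 - k)" M]
    by (simp add: rokhlin_tower_def M_def)
qed

lemma alpha_rokhlin_tower:
  assumes k: "k < 2 ^ n"
  shows "CnormC d (Cminus d xs (Calpha d (rokhlin_tower n k)) (rokhlin_tower n ((k + 1) mod 2 ^ n))) = 0"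
proof -
  define M :: nat where "M = 2 ^ n"
  have "agree_on (rR d n) (XZ d n) (alphan d n (zindicator (M - 1 - k))) (zindicator (M - 1 - (k + 1) mod M))"
    unfolding agree_on_def
  proof (intro ballI allI impI)
    fix q i j assume "q \<in> XZ d n" "i < rR d n" "j < rR d n"
    moreover have "snd q < M" using \<open>q \<in> XZ d n\<close> by (auto simp: XZ_def Zn_def M_def)
    ultimately show "alphan d n (zindicator (M - 1 - k)) q i j = zindicator (M - 1 - (k + 1) mod M) q i j"
      using reversed_index_shift[of k M "snd q"] k
      by (simp add: zindicator_def alphan_mscalar M_def)
  qed
  then show ?thesis
    by (simp add: rokhlin_tower_def Calpha_def Cminus_def lminus_same_level CnormC_const lnorm_def
        Cnorm_eq_supnorm supnorm_zero XZ_nonempty agree_on_def M_def)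
qed

lemma commutator_rokhlin_tower_le:
  assumes a: "a \<in> Ccar d xs" and level: "fst (a N0) \<le> n" and "0 \<le> \<delta>"
    and close: "\<And>i. N0 \<le> i \<Longrightarrow> ldist d xs (a i) (a N0) \<le> \<delta>"
  shows "CnormC d (Cminus d xs (Cmul d xs (rokhlin_tower n k) a) (Cmul d xs a (rokhlin_tower n k))) \<le> 2 * \<delta>"
proof -
  let ?e = "(n, zindicator (2 ^ n - 1 - k))"
  have "CnormC d (Cminus d xs (Cmul d xs (rokhlin_tower n k) a) (Cmul d xs a (rokhlin_tower n k)))
      \<le> 2 * lnorm d ?e * \<delta>"
    unfolding rokhlin_tower_def using level zindicator_Cn_car
    by (intro CnormC_commutator_le[OF _ a close]) (auto simp: lvalid_def zindicator_def lnorm_lcomm_mscalar)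
  also have "\<dots> \<le> 2 * 1 * \<delta>"
    using lnorm_zindicator_le \<open>0 \<le> \<delta>\<close> by (intro mult_right_mono) auto
  finally show ?thesis by simp
qed

end

theorem mainTheorem4:
  fixes d :: "nat \<Rightarrow> nat" and xs :: "nat \<Rightarrow> (nat \<Rightarrow> real^3)"
  assumes d0: "d 0 = 1"
    and dgrow: "\<And>n. n \<ge> 1 \<Longrightarrow> d n > 2 ^ (n - 1)"
    and kappa: "kappa d > 1/2"
    and xs_in: "\<And>m. xs m \<in> Xsp d m"
    and dense: "\<And>n. Xsp d n \<subseteq> closure
        {iterK d n k nu (xs (n + k)) | k nu. k \<ge> 1 \<and> (\<forall>j\<in>{1..k}. nu j \<in> {1..d (n + j)})}"
  shows "\<forall>F \<epsilon> N. finite F \<and> F \<subseteq> Ccar d xs \<and> \<epsilon> > 0 \<longrightarrow>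
    (\<exists>m p. m \<ge> N \<and> (\<exists>t. m = 2 ^ t) \<and>
       (\<forall>k<m. Cproj d xs (p k)) \<and>
       Ceq d xs (Csum d xs p m) Cone \<and>
       (\<forall>k<m. CnormC d (Cminus d xs (Calpha d (p k)) (p ((k + 1) mod m))) < \<epsilon>) \<and>
       (\<forall>k<m. \<forall>a\<in>F. CnormC d (Cminus d xs (Cmul d xs (p k) a) (Cmul d xs a (p k))) < \<epsilon>))"
proof (intro allI impI)
  fix F :: "celt set" and \<epsilon> :: real and N :: nat
  assume "finite F \<and> F \<subseteq> Ccar d xs \<and> \<epsilon> > 0"
  then have F: "finite F" "F \<subseteq> Ccar d xs" and \<epsilon>: "\<epsilon> > 0" by auto
  have "0 < d n" for n using d0 dgrow[of n] by (cases n) auto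
  then interpret construction d xs by unfold_locales (rule xs_in)
  obtain L where L: "\<And>a. a \<in> F \<Longrightarrow> \<exists>N0. fst (a N0) \<le> L \<and> (\<forall>i\<ge>N0. ldist d xs (a i) (a N0) < \<epsilon> / 3)"
    using Ccar_finite_level_approx[OF F] \<epsilon> by (metis divide_pos_pos zero_less_numeral)
  define n where "n = N + L"
  have commutator: "CnormC d (Cminus d xs (Cmul d xs (rokhlin_tower n k) a) (Cmul d xs a (rokhlin_tower n k))) < \<epsilon>"
    if a: "a \<in> F" for k a
  proof -
    obtain N0 where "fst (a N0) \<le> L" "\<forall>i\<ge>N0. ldist d xs (a i) (a N0) < \<epsilon> / 3" using L[OF a] by blast
    then have "CnormC d (Cminus d xs (Cmul d xs (rokhlin_tower n k) a) (Cmul d xs a (rokhlin_tower n k)))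
        \<le> 2 * (\<epsilon> / 3)"
      using a F(2) \<epsilon> by (intro commutator_rokhlin_tower_le) (auto simp: n_def less_imp_le)
    then show ?thesis using \<epsilon> by simp
  qed
  have "N \<le> 2 ^ n" using less_exp[of n] unfolding n_def by linarith
  then show "\<exists>m p. m \<ge> N \<and> (\<exists>t. m = 2 ^ t) \<and> (\<forall>k<m. Cproj d xs (p k)) \<and> Ceq d xs (Csum d xs p m) Cone \<and>
       (\<forall>k<m. CnormC d (Cminus d xs (Calpha d (p k)) (p ((k + 1) mod m))) < \<epsilon>) \<and>
       (\<forall>k<m. \<forall>a\<in>F. CnormC d (Cminus d xs (Cmul d xs (p k) a) (Cmul d xs a (p k))) < \<epsilon>)"
    using Cproj_zindicator Csum_rokhlin_tower alpha_rokhlin_tower commutator \<epsilon>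
    by (intro exI[of _ "2 ^ n"] exI[of _ "rokhlin_tower n"]) (auto simp: rokhlin_tower_def)
qed

end
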